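(* If $m,n,s,t$ are positive integers, then the direct product ${\sf M}_m(C_{2s+1})\times {\sf M}_n(C_{2t+1})$ is not a cover graph.
   Context: $C_k$ is the cycle on $k$ vertices. A graph is a cover graph if it is the underlying (undirected) graph of the Hasse diagram of some finite partially ordered set. The direct product $G \times H$ has vertex set $V(G)\times V(H)$, with $(g_i,h_s)$ adjacent to $(g_j,h_t)$ if and only if $g_ig_j \in E(G)$ and $h_sh_t \in E(H)$. For a graph $G$ with vertex set $V_0=\{\langle 0,j\rangle : 0\le j\le n-1\}$ and edge set $E_0$, and $m>0$, the generalized Mycielskian ${\sf M}_m(G)$ has vertex set $V_0\cup V_1\cup\cdots\cup V_m\cup\{u\}$ where $V_i=\{\langle i,j\rangle: 0\le j\le n-1\}$, and edge set $E_0\cup E_1\cup\cdots\cup E_m\cup\{\langle m,j\rangle u: 0\le j\le n-1\}$, where $E_i=\{\langle i-1,j\rangle\langle i,k\rangle : \langle 0,j\rangle\langle 0,k\rangle\in E_0\}$ for $1\le i\le m$. *)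

theory Defs
  imports Main
begin

text \<open>A (simple, undirected) graph is a vertex set together with an adjacency
predicate; all our constructions give symmetric, irreflexive adjacency
relations that only relate vertices of the vertex set.\<close>

type_synonym 'a graph = "'a set \<times> ('a \<Rightarrow> 'a \<Rightarrow> bool)"

definition verts :: "'a graph \<Rightarrow> 'a set" where "verts G = fst G"
definition adj :: "'a graph \<Rightarrow> 'a \<Rightarrow> 'a \<Rightarrow> bool" where "adj G = snd G"

text \<open>The cycle C_k on vertices 0,...,k-1 (meant for k >= 3).\<close>
definition cycle_graph :: "nat \<Rightarrow> nat graph" where
  "cycle_graph k = ({0..<k},
     (\<lambda>i j. i < k \<and> j < k \<and> (j = (i + 1) mod k \<or> i = (j + 1) mod k)))"

definition direct_product :: "'a graph \<Rightarrow> 'b graph \<Rightarrow> ('a \<times> 'b) graph" where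
  "direct_product G H = (verts G \<times> verts H,
     (\<lambda>(g, h) (g', h'). g \<in> verts G \<and> g' \<in> verts G \<and> h \<in> verts H \<and> h' \<in> verts H \<and>
        adj G g g' \<and> adj H h h'))"

text \<open>Generalized Mycielskian M_m(G): vertex \<langle>i,v\<rangle> is Some (i, v) with i \<le> m,
  v a vertex of G; the apex u is None.\<close>
definition myc_adj :: "nat \<Rightarrow> 'a graph \<Rightarrow> (nat \<times> 'a) option \<Rightarrow> (nat \<times> 'a) option \<Rightarrow> bool" where
  "myc_adj m G x y =
     (case (x, y) of
        (Some (i, a), Some (j, b)) \<Rightarrow>
           i \<le> m \<and> j \<le> m \<and> a \<in> verts G \<and> b \<in> verts G \<and> adj G a b \<and>
           ((i = 0 \<and> j = 0) \<or> j = i + 1 \<or> i = j + 1)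
      | (Some (i, a), None) \<Rightarrow> i = m \<and> a \<in> verts G
      | (None, Some (j, b)) \<Rightarrow> j = m \<and> b \<in> verts G
      | (None, None) \<Rightarrow> False)"

definition mycielskian :: "nat \<Rightarrow> 'a graph \<Rightarrow> (nat \<times> 'a) option graph" where
  "mycielskian m G = (insert None (Some ` ({0..m} \<times> verts G)), myc_adj m G)"

definition covers :: "'a set \<Rightarrow> 'a rel \<Rightarrow> 'a \<Rightarrow> 'a \<Rightarrow> bool" where
  "covers V r x y \<longleftrightarrow> (x, y) \<in> r \<and> x \<noteq> y \<and>
      \<not> (\<exists>z\<in>V. z \<noteq> x \<and> z \<noteq> y \<and> (x, z) \<in> r \<and> (z, y) \<in> r)"

definition is_cover_graph :: "'a graph \<Rightarrow> bool" where
  "is_cover_graph G \<longleftrightarrow> finite (verts G) \<and>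
     (\<exists>r. partial_order_on (verts G) r \<and>
        (\<forall>x\<in>verts G. \<forall>y\<in>verts G. adj G x y \<longleftrightarrow> (covers (verts G) r x y \<or> covers (verts G) r y x)))"

end

theory Submission
  imports Defs
begin

text \<open>Call two walks homotopic if one arises from the other by repeatedly replacing the middle
  vertex of a two-step subwalk by another common neighbour of its ends. In a cover graph the
  number of upward minus downward steps of a walk is a homotopy invariant, because two
  two-step walks with the same ends are both up-up, both down-down, or both mixed. It
  changes sign under reversal and has the parity of the number of edges, so no walk with an
  odd number of edges is homotopic to its reverse.

  In \<open>M\<^sub>m(C\<^sub>p)\<close>, \<open>p\<close> odd, consider the closed walk that descends diagonally from the apex to
  level 0, crosses the base edge \<open>\<langle>0,k\<rangle>\<langle>0,k+1\<rangle>\<close> and ascends again; it has \<open>2m + 3\<close> edges.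
  It is homotopic to its copy shifted by two, hence, \<open>p\<close> being odd, to its copy shifted by one,
  and that copy is one square move away from its reverse. Padding by an edge traversed back
  and forth yields such walks of every sufficiently large even length in both factors, and
  the walk zipped from two of equal length in the direct product is homotopic to its reverse,
  which rules out a cover graph.\<close>

lemma rtranclp_map_invariant:
  assumes "R\<^sup>*\<^sup>* x y" and "P x"
    and invariant: "\<And>x y. R x y \<Longrightarrow> P x \<Longrightarrow> P y"
    and map_step: "\<And>x y. R x y \<Longrightarrow> P x \<Longrightarrow> S (f x) (f y)"
  shows "S\<^sup>*\<^sup>* (f x) (f y)"
proof -
  from assms(1) have "S\<^sup>*\<^sup>* (f x) (f y) \<and> P y"
  proof (induction rule: rtranclp_induct)
    case base
    then show ?case using \<open>P x\<close> by simp
  next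
    case (step y z)
    then show ?case using invariant map_step by (meson rtranclp.rtrancl_into_rtrancl)
  qed
  then show ?thesis ..
qed

definition undirected_graph :: "'a graph \<Rightarrow> bool" where
  "undirected_graph G \<longleftrightarrow> symp (adj G) \<and> (\<forall>a b. adj G a b \<longrightarrow> a \<in> verts G \<and> b \<in> verts G)"

lemma undirected_graph_adj_sym: "undirected_graph G \<Longrightarrow> adj G a b \<Longrightarrow> adj G b a"
  unfolding undirected_graph_def by (blast dest: sympD)

lemma undirected_graph_adj_in_verts:
  "undirected_graph G \<Longrightarrow> adj G a b \<Longrightarrow> a \<in> verts G \<and> b \<in> verts G"
  unfolding undirected_graph_def by blast

definition walk :: "'a graph \<Rightarrow> 'a list \<Rightarrow> bool" where
  "walk G xs \<longleftrightarrow> successively (adj G) xs"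

lemma walk_Nil [simp]: "walk G []"
  and walk_singleton [simp]: "walk G [x]"
  and walk_Cons_Cons [simp]: "walk G (x # y # xs) \<longleftrightarrow> adj G x y \<and> walk G (y # xs)"
  by (simp_all add: walk_def)

lemma walk_append_iff:
  "walk G (xs @ ys) \<longleftrightarrow> walk G xs \<and> walk G ys \<and> (xs = [] \<or> ys = [] \<or> adj G (last xs) (hd ys))"
  by (simp add: walk_def successively_append_iff)

lemma walk_rev: "undirected_graph G \<Longrightarrow> walk G (rev xs) \<longleftrightarrow> walk G xs"
  unfolding walk_def by (auto intro: successively_mono dest: undirected_graph_adj_sym)

definition square_move :: "'a graph \<Rightarrow> 'a list \<Rightarrow> 'a list \<Rightarrow> bool" where
  "square_move G xs ys \<longleftrightarrow> (\<exists>pre x y y' z post. xs = pre @ x # y # z # post \<and>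
      ys = pre @ x # y' # z # post \<and> adj G x y' \<and> adj G y' z)"

abbreviation homotopic :: "'a graph \<Rightarrow> 'a list \<Rightarrow> 'a list \<Rightarrow> bool" where
  "homotopic G \<equiv> (square_move G)\<^sup>*\<^sup>*"

lemma square_moveI:
  "adj G x y' \<Longrightarrow> adj G y' z \<Longrightarrow> square_move G (pre @ x # y # z # post) (pre @ x # y' # z # post)"
  unfolding square_move_def by blast

lemma square_move_length: "square_move G xs ys \<Longrightarrow> length ys = length xs"
  unfolding square_move_def by auto

lemma square_move_walk: "square_move G xs ys \<Longrightarrow> walk G xs \<Longrightarrow> walk G ys"
  unfolding square_move_def by (auto simp: walk_append_iff)

lemma square_move_sym: "square_move G xs ys \<Longrightarrow> walk G xs \<Longrightarrow> square_move G ys xs"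
  unfolding square_move_def by (fastforce simp: walk_append_iff)

lemma square_move_append: "square_move G xs ys \<Longrightarrow> square_move G (A @ xs @ B) (A @ ys @ B)"
  unfolding square_move_def by (metis append.assoc append_Cons)

lemma square_move_map:
  assumes "\<And>a b. adj G a b \<Longrightarrow> adj H (f a) (f b)" and "square_move G xs ys"
  shows "square_move H (map f xs) (map f ys)"
  using assms(2) unfolding square_move_def by (fastforce intro: assms(1))

lemma square_move_rev:
  assumes "undirected_graph G" and "square_move G xs ys"
  shows "square_move G (rev xs) (rev ys)"
proof -
  obtain pre x y y' z post where "xs = pre @ x # y # z # post" "ys = pre @ x # y' # z # post"
    and "adj G x y'" "adj G y' z"
    using assms(2) unfolding square_move_def by blast
  then show ?thesis
    using square_moveI[of G z y' x "rev post" y "rev pre"] undirected_graph_adj_sym[OF assms(1)]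
    by simp
qed

lemma homotopic_walk: "homotopic G xs ys \<Longrightarrow> walk G xs \<Longrightarrow> walk G ys"
  by (induction rule: rtranclp_induct) (auto intro: square_move_walk)

lemma homotopic_sym: "homotopic G xs ys \<Longrightarrow> walk G xs \<Longrightarrow> homotopic G ys xs"
proof (induction rule: rtranclp_induct)
  case (step ys zs)
  then have "square_move G zs ys" using homotopic_walk square_move_sym by blast
  then show ?case using step by (meson converse_rtranclp_into_rtranclp)
qed simp

lemma homotopic_append: "homotopic G xs ys \<Longrightarrow> homotopic G (A @ xs @ B) (A @ ys @ B)"
  by (rule rtranclp_map_invariant[where R = "square_move G" and P = "\<lambda>_. True"
        and f = "\<lambda>xs. A @ xs @ B"])
    (auto intro: square_move_append)

lemma homotopic_map:
  "(\<And>a b. adj G a b \<Longrightarrow> adj H (f a) (f b)) \<Longrightarrow> homotopic G xs ys \<Longrightarrow>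
    homotopic H (map f xs) (map f ys)"
  by (rule rtranclp_map_invariant[where R = "square_move G" and P = "\<lambda>_. True" and f = "map f"])
    (auto intro: square_move_map)

lemma homotopic_rev: "undirected_graph G \<Longrightarrow> homotopic G xs ys \<Longrightarrow> homotopic G (rev xs) (rev ys)"
  by (rule rtranclp_map_invariant[where R = "square_move G" and P = "\<lambda>_. True" and f = rev])
    (auto intro: square_move_rev)

definition reversible :: "'a graph \<Rightarrow> 'a list \<Rightarrow> bool" where
  "reversible G xs \<longleftrightarrow> walk G xs \<and> homotopic G xs (rev xs)"

lemma reversible_pad:
  "reversible G xs \<Longrightarrow> walk G (ys @ xs @ rev ys) \<Longrightarrow> reversible G (ys @ xs @ rev ys)"
  unfolding reversible_def using homotopic_append[of G xs "rev xs" ys "rev ys"] by simp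

definition step_sign :: "'a rel \<Rightarrow> 'a \<Rightarrow> 'a \<Rightarrow> int" where
  "step_sign r a b = (if (a, b) \<in> r then 1 else -1)"

fun signed_length :: "'a rel \<Rightarrow> 'a list \<Rightarrow> int" where
  "signed_length r (x # y # xs) = step_sign r x y + signed_length r (y # xs)"
| "signed_length r _ = 0"

lemma signed_length_append:
  "signed_length r (xs @ y # ys) = signed_length r (xs @ [y]) + signed_length r (y # ys)"
  by (induction xs rule: induct_list012) auto

lemma odd_signed_length_iff: "xs \<noteq> [] \<Longrightarrow> odd (signed_length r xs) \<longleftrightarrow> even (length xs)"
  by (induction xs rule: induct_list012) (auto simp: step_sign_def)

locale cover_order =
  fixes K :: "'a graph" and r :: "'a rel"
  assumes partial_order: "partial_order_on (verts K) r"
    and adj_iff_covers: "\<And>x y. x \<in> verts K \<Longrightarrow> y \<in> verts K \<Longrightarrow>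
      adj K x y \<longleftrightarrow> covers (verts K) r x y \<or> covers (verts K) r y x"
    and adj_in_verts: "\<And>a b. adj K a b \<Longrightarrow> a \<in> verts K \<and> b \<in> verts K"
begin

lemma trans_order: "trans r" and antisym_order: "antisym r"
  using partial_order_onD[OF partial_order] by auto

lemma adj_covers: "adj K a b \<Longrightarrow> covers (verts K) r a b \<or> covers (verts K) r b a"
  using adj_in_verts adj_iff_covers by blast

lemma adj_sym: "adj K a b \<Longrightarrow> adj K b a"
  using adj_in_verts adj_iff_covers by blast

lemma adj_comparable: "adj K a b \<Longrightarrow> a \<noteq> b \<and> ((a, b) \<in> r \<longleftrightarrow> (b, a) \<notin> r)"
  using adj_covers antisym_order unfolding covers_def antisym_def by blast

lemma step_sign_swap: "adj K a b \<Longrightarrow> step_sign r b a = - step_sign r a b"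
  using adj_comparable by (auto simp: step_sign_def)

lemma adj_adj_between:
  assumes xz: "(x, z) \<in> r" "x \<noteq> z" and xy: "adj K x y" and yz: "adj K y z"
  shows "(x, y) \<in> r \<and> (y, z) \<in> r"
proof -
  have V: "x \<in> verts K" "y \<in> verts K" "z \<in> verts K"
    using adj_in_verts xy yz by auto
  consider "covers (verts K) r x y" "covers (verts K) r y z"
    | "covers (verts K) r x y" "covers (verts K) r z y"
    | "covers (verts K) r y x" "covers (verts K) r y z"
    | "covers (verts K) r y x" "covers (verts K) r z y"
    using adj_covers xy yz by blast
  then show ?thesis
  proof cases
    case 1
    then show ?thesis unfolding covers_def by blast
  next
    case 2
    then have "z \<noteq> y" "(z, y) \<in> r" unfolding covers_def by auto
    with 2(1) have False
      using xz V unfolding covers_def by auto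
    then show ?thesis ..
  next
    case 3
    then have "x \<noteq> y" "(y, x) \<in> r" unfolding covers_def by auto
    with 3(2) have False
      using xz V unfolding covers_def by auto
    then show ?thesis ..
  next
    case 4
    then have "(z, x) \<in> r" using trans_order unfolding covers_def trans_def by blast
    then show ?thesis using xz antisym_order unfolding antisym_def by blast
  qed
qed

lemma two_step_sign:
  assumes "adj K x y" "adj K y z"
  shows "step_sign r x y + step_sign r y z =
    (if x = z then 0 else if (x, z) \<in> r then 2 else if (z, x) \<in> r then -2 else 0)"
proof -
  have comparable: "(x, y) \<in> r \<longleftrightarrow> (y, x) \<notin> r" "(y, z) \<in> r \<longleftrightarrow> (z, y) \<notin> r"
    using adj_comparable assms by blast+
  consider "x = z" | "x \<noteq> z" "(x, z) \<in> r" | "x \<noteq> z" "(z, x) \<in> r"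
    | "(x, z) \<notin> r" "(z, x) \<notin> r"
    by blast
  then show ?thesis
  proof cases
    case 1
    then show ?thesis using step_sign_swap[OF assms(1)] by simp
  next
    case 2
    then have "(x, y) \<in> r" "(y, z) \<in> r"
      using adj_adj_between assms by blast+
    with 2 show ?thesis by (simp add: step_sign_def)
  next
    case 3
    then have "(z, y) \<in> r" "(y, x) \<in> r"
      using adj_adj_between[of z x y] adj_sym assms by blast+
    moreover have "(x, z) \<notin> r"
      using 3 antisym_order by (meson antisymD)
    ultimately show ?thesis using 3 comparable by (simp add: step_sign_def)
  next
    case 4
    then have "(x, y) \<in> r \<longleftrightarrow> (y, z) \<notin> r"
      using comparable trans_order by (meson transD)
    with 4 show ?thesis by (simp add: step_sign_def)
  qed
qed

lemma signed_length_square_move: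
  assumes "square_move K xs ys" and "walk K xs"
  shows "signed_length r ys = signed_length r xs"
proof -
  obtain pre x y y' z post where xs: "xs = pre @ x # y # z # post"
    and ys: "ys = pre @ x # y' # z # post" and "adj K x y'" "adj K y' z"
    using assms(1) unfolding square_move_def by blast
  moreover have "adj K x y" "adj K y z"
    using assms(2) unfolding xs by (auto simp: walk_append_iff)
  ultimately have "step_sign r x y' + step_sign r y' z = step_sign r x y + step_sign r y z"
    using two_step_sign[of x y z] two_step_sign[of x y' z] by simp
  then have "signed_length r (x # y' # z # post) = signed_length r (x # y # z # post)"
    by simp
  then show ?thesis
    unfolding xs ys
    using signed_length_append[of r pre x "y # z # post"]
      signed_length_append[of r pre x "y' # z # post"]
    by simp
qed

lemma signed_length_homotopic:
  "homotopic K xs ys \<Longrightarrow> walk K xs \<Longrightarrow> signed_length r ys = signed_length r xs"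
  by (induction rule: rtranclp_induct) (metis signed_length_square_move homotopic_walk)+

lemma signed_length_rev: "walk K xs \<Longrightarrow> signed_length r (rev xs) = - signed_length r xs"
proof (induction xs rule: induct_list012)
  case (3 x y zs)
  have "signed_length r (rev (x # y # zs)) = signed_length r (rev zs @ [y]) + step_sign r y x"
    using signed_length_append[of r "rev zs" y "[x]"] by simp
  then show ?case using 3 step_sign_swap[of x y] by simp
qed auto

lemma reversible_length_odd:
  assumes "reversible K xs" and "xs \<noteq> []"
  shows "odd (length xs)"
proof -
  have walk: "walk K xs" and "homotopic K xs (rev xs)"
    using assms(1) unfolding reversible_def by auto
  then have "signed_length r (rev xs) = signed_length r xs"
    using signed_length_homotopic by blast
  then have "signed_length r xs = 0"
    using signed_length_rev[OF walk] by simp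
  then show ?thesis
    using odd_signed_length_iff[OF assms(2), of r] by simp
qed

end

lemma cover_graph_reversible_length_odd:
  assumes "is_cover_graph K" and "\<And>a b. adj K a b \<Longrightarrow> a \<in> verts K \<and> b \<in> verts K"
    and "reversible K xs" and "xs \<noteq> []"
  shows "odd (length xs)"
proof -
  obtain r where "partial_order_on (verts K) r"
    and "\<forall>x\<in>verts K. \<forall>y\<in>verts K. adj K x y \<longleftrightarrow> covers (verts K) r x y \<or> covers (verts K) r y x"
    using assms(1) unfolding is_cover_graph_def by blast
  then interpret cover_order K r
    using assms(2) by unfold_locales blast+
  show ?thesis using reversible_length_odd assms(3,4) .
qed

lemma verts_direct_product [simp]: "verts (direct_product G H) = verts G \<times> verts H"
  by (simp add: direct_product_def verts_def)

lemma adj_direct_product [simp]: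
  "adj (direct_product G H) (g, h) (g', h') \<longleftrightarrow>
    g \<in> verts G \<and> g' \<in> verts G \<and> h \<in> verts H \<and> h' \<in> verts H \<and> adj G g g' \<and> adj H h h'"
  by (simp add: direct_product_def adj_def verts_def)

lemma undirected_graph_direct_product:
  "undirected_graph G \<Longrightarrow> undirected_graph H \<Longrightarrow> undirected_graph (direct_product G H)"
  unfolding undirected_graph_def symp_def by auto

lemma walk_zip:
  assumes "undirected_graph G" "undirected_graph H"
  shows "walk G xs \<Longrightarrow> walk H zs \<Longrightarrow> length xs = length zs \<Longrightarrow>
    walk (direct_product G H) (zip xs zs)"
proof (induction xs arbitrary: zs rule: induct_list012)
  case (2 x)
  then show ?case by (cases zs) auto
next
  case (3 x y xs)
  then obtain a b zs' where zs: "zs = a # b # zs'"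
    by (metis length_Suc_conv)
  have "walk (direct_product G H) (zip (y # xs) (b # zs'))"
    using "3.IH"(2)[of "b # zs'"] "3.prems" zs by simp
  moreover have "adj (direct_product G H) (x, a) (y, b)"
    using "3.prems" zs undirected_graph_adj_in_verts[OF assms(1)]
      undirected_graph_adj_in_verts[OF assms(2)]
    by auto
  ultimately show ?case using zs by simp
qed simp

lemma map_swap_zip: "map prod.swap (zip xs ys) = zip ys xs"
  by (induction xs ys rule: list_induct2') auto

lemma square_move_zip_left:
  assumes G: "undirected_graph G" and H: "undirected_graph H"
    and move: "square_move G xs ys" and "walk H zs" and "length zs = length xs"
  shows "square_move (direct_product G H) (zip xs zs) (zip ys zs)"
proof -
  obtain pre x y y' z post where xs: "xs = pre @ x # y # z # post"
    and ys: "ys = pre @ x # y' # z # post" and "adj G x y'" "adj G y' z"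
    using move unfolding square_move_def by blast
  have "length (drop (length pre) zs) = Suc (Suc (Suc (length post)))"
    using \<open>length zs = length xs\<close> xs by simp
  then obtain a b c rest where drop: "drop (length pre) zs = a # b # c # rest"
    by (metis length_Suc_conv)
  have "walk H (take (length pre) zs @ a # b # c # rest)"
    using \<open>walk H zs\<close> drop by (metis append_take_drop_id)
  then have "adj H a b" "adj H b c"
    by (auto simp: walk_append_iff)
  then have "adj (direct_product G H) (x, a) (y', b)" "adj (direct_product G H) (y', b) (z, c)"
    using \<open>adj G x y'\<close> \<open>adj G y' z\<close> undirected_graph_adj_in_verts[OF G]
      undirected_graph_adj_in_verts[OF H]
    by auto
  then show ?thesis
    unfolding xs ys zip_append1 drop using square_moveI by fastforce
qed

lemma homotopic_zip_left:
  assumes "undirected_graph G" "undirected_graph H"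
    and "homotopic G xs ys" "walk G xs" "walk H zs" "length zs = length xs"
  shows "homotopic (direct_product G H) (zip xs zs) (zip ys zs)"
proof (rule rtranclp_map_invariant[where R = "square_move G" and f = "\<lambda>xs. zip xs zs"
      and P = "\<lambda>xs. walk G xs \<and> length zs = length xs"])
  show "\<And>xs ys. square_move G xs ys \<Longrightarrow> walk G xs \<and> length zs = length xs \<Longrightarrow>
      walk G ys \<and> length zs = length ys"
    using square_move_walk square_move_length by metis
  show "\<And>xs ys. square_move G xs ys \<Longrightarrow> walk G xs \<and> length zs = length xs \<Longrightarrow>
      square_move (direct_product G H) (zip xs zs) (zip ys zs)"
    using square_move_zip_left assms(1,2,5) by blast
qed (use assms in auto)

lemma homotopic_zip_right:
  assumes G: "undirected_graph G" and H: "undirected_graph H"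
    and "homotopic H zs ws" "walk H zs" "walk G xs" "length zs = length xs"
  shows "homotopic (direct_product G H) (zip xs zs) (zip xs ws)"
proof -
  have "homotopic (direct_product H G) (zip zs xs) (zip ws xs)"
    using homotopic_zip_left[OF H G] assms(3-6) by simp
  moreover have "adj (direct_product G H) (prod.swap u) (prod.swap v)"
    if "adj (direct_product H G) u v" for u v
    using that by (cases u; cases v) auto
  ultimately have "homotopic (direct_product G H) (map prod.swap (zip zs xs))
      (map prod.swap (zip ws xs))"
    by (rule homotopic_map[rotated])
  then show ?thesis by (simp add: map_swap_zip)
qed

lemma reversible_zip:
  assumes G: "undirected_graph G" and H: "undirected_graph H"
    and "reversible G xs" "reversible H zs" "length xs = length zs"
  shows "reversible (direct_product G H) (zip xs zs)"
proof -
  have walks: "walk G xs" "walk G (rev xs)" "walk H zs"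
    using assms(3,4) walk_rev[OF G] unfolding reversible_def by auto
  have "homotopic (direct_product G H) (zip xs zs) (zip (rev xs) zs)"
    using homotopic_zip_left[OF G H] assms walks unfolding reversible_def by simp
  also have "homotopic (direct_product G H) \<dots> (zip (rev xs) (rev zs))"
    using homotopic_zip_right[OF G H] assms walks unfolding reversible_def by simp
  also have "zip (rev xs) (rev zs) = rev (zip xs zs)"
    using assms(5) by (simp add: zip_rev)
  finally show ?thesis
    using walk_zip[OF G H] assms walks unfolding reversible_def by simp
qed

theorem direct_product_not_cover_graph:
  assumes G: "undirected_graph G" and H: "undirected_graph H"
    and "reversible G xs" "reversible H zs" "length xs = length zs"
    and "xs \<noteq> []" "even (length xs)"
  shows "\<not> is_cover_graph (direct_product G H)"
proof
  assume cover: "is_cover_graph (direct_product G H)"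
  have "odd (length (zip xs zs))"
  proof (rule cover_graph_reversible_length_odd[OF cover])
    show "reversible (direct_product G H) (zip xs zs)"
      using reversible_zip[OF G H] assms(3-5) .
    show "zip xs zs \<noteq> []"
      using assms(5,6) by (cases xs; cases zs) auto
  qed (use undirected_graph_adj_in_verts[OF undirected_graph_direct_product[OF G H]] in blast)
  then show False
    using assms(5,7) by simp
qed

lemma verts_cycle_graph: "verts (cycle_graph k) = {0..<k}"
  by (simp add: cycle_graph_def verts_def)

lemma adj_cycle_graph:
  "adj (cycle_graph k) i j \<longleftrightarrow> i < k \<and> j < k \<and> (j = (i + 1) mod k \<or> i = (j + 1) mod k)"
  by (simp add: cycle_graph_def adj_def)

lemma undirected_graph_cycle_graph: "undirected_graph (cycle_graph k)"
  unfolding undirected_graph_def symp_def adj_cycle_graph verts_cycle_graph by auto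

lemma adj_mycielskian: "adj (mycielskian m G) = myc_adj m G"
  by (simp add: mycielskian_def adj_def)

lemma verts_mycielskian: "verts (mycielskian m G) = insert None (Some ` ({0..m} \<times> verts G))"
  by (simp add: mycielskian_def verts_def)

lemma undirected_graph_mycielskian:
  assumes "undirected_graph G"
  shows "undirected_graph (mycielskian m G)"
proof -
  have "myc_adj m G y x" if "myc_adj m G x y" for x y
    using that undirected_graph_adj_sym[OF assms]
    by (auto simp: myc_adj_def split: option.splits prod.splits)
  moreover have "x \<in> verts (mycielskian m G)" if "myc_adj m G x y" for x y
    using that by (auto simp: myc_adj_def verts_mycielskian split: option.splits prod.splits)
  ultimately show ?thesis
    unfolding undirected_graph_def symp_def adj_mycielskian by blast
qed

fun alternating :: "'a \<Rightarrow> 'a \<Rightarrow> nat \<Rightarrow> 'a list" where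
  "alternating a b 0 = []"
| "alternating a b (Suc d) = alternating b a d @ [a]"

lemma length_alternating [simp]: "length (alternating a b d) = d"
  by (induction d arbitrary: a b) auto

lemma walk_alternating: "adj G a b \<Longrightarrow> adj G b a \<Longrightarrow> walk G (alternating a b d)"
proof (induction d arbitrary: a b)
  case (Suc d)
  then show ?case
    by (cases d) (auto simp: walk_append_iff)
qed simp

locale odd_mycielskian =
  fixes m p :: nat
  assumes m_pos: "0 < m" and odd_p: "odd p"
begin

abbreviation G :: "(nat \<times> nat) option graph" where
  "G \<equiv> mycielskian m (cycle_graph p)"

lemma undirected_G: "undirected_graph G"
  by (intro undirected_graph_mycielskian undirected_graph_cycle_graph)

lemma adj_sym: "adj G x y \<Longrightarrow> adj G y x"
  using undirected_graph_adj_sym[OF undirected_G] .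

definition node :: "nat \<Rightarrow> nat \<Rightarrow> (nat \<times> nat) option" where
  "node i j = Some (i, j mod p)"

lemma adj_node_Suc_Suc: "i < m \<Longrightarrow> adj G (node i a) (node (Suc i) (Suc a))"
  and adj_Suc_node_Suc: "i < m \<Longrightarrow> adj G (node i (Suc a)) (node (Suc i) a)"
  and adj_node_base: "adj G (node 0 a) (node 0 (Suc a))"
  and adj_node_apex: "adj G (node m a) None"
  using odd_pos[OF odd_p]
  by (auto simp: node_def adj_mycielskian myc_adj_def adj_cycle_graph verts_cycle_graph
    mod_Suc_eq)

definition climb :: "nat \<Rightarrow> nat \<Rightarrow> (nat \<times> nat) option list" where
  "climb i j = map (\<lambda>l. node l (j + (l - i))) [i..<Suc m] @ [None]"

lemma climb_step: "i < m \<Longrightarrow> climb i j = node i j # climb (Suc i) (Suc j)"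
proof -
  assume "i < m"
  moreover have "j + (l - i) = Suc j + (l - Suc i)" if "Suc i \<le> l" for l
    using that by simp
  ultimately show ?thesis
    unfolding climb_def by (simp add: upt_conv_Cons)
qed

lemma climb_top: "climb m j = [node m j, None]"
  by (simp add: climb_def)

lemma climb_Cons:
  assumes "i \<le> m"
  obtains R where "climb i j = node i j # R"
  using assms climb_step climb_top by (metis le_neq_implies_less)

lemma climb_mod: "j mod p = j' mod p \<Longrightarrow> climb i j = climb i j'"
  unfolding climb_def node_def
  by (simp add: mod_add_left_eq[of j, symmetric] mod_add_left_eq[of j'])

lemma walk_climb: "i \<le> m \<Longrightarrow> walk G (climb i j)"
proof (induction "m - i" arbitrary: i j)
  case 0
  then have "i = m" by simp
  then show ?case using adj_node_apex by (simp add: climb_top)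
next
  case (Suc d)
  then have "i < m" by simp
  moreover obtain R where "climb (Suc i) (Suc j) = node (Suc i) (Suc j) # R"
    using climb_Cons \<open>i < m\<close> by (metis Suc_leI)
  moreover have "walk G (climb (Suc i) (Suc j))"
    using Suc by simp
  ultimately show ?case
    using adj_node_Suc_Suc by (simp add: climb_step)
qed

definition bend :: "nat \<Rightarrow> nat \<Rightarrow> (nat \<times> nat) option list" where
  "bend i k = node i (Suc k) # climb (Suc i) k"

lemma bend_homotopic_climb: "i < m \<Longrightarrow> homotopic G (bend i k) (climb i (Suc k))"
proof (induction "m - i" arbitrary: i k rule: less_induct)
  case less
  show ?case
  proof (cases "Suc i = m")
    case True
    have "square_move G ([] @ node i (Suc k) # node m k # None # [])
        ([] @ node i (Suc k) # node m (Suc (Suc k)) # None # [])"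
      using adj_node_Suc_Suc[of i "Suc k"] adj_node_apex True
      by (intro square_moveI) auto
    then show ?thesis
      using True less.prems by (simp add: bend_def climb_step climb_top)
  next
    case False
    then have "Suc i < m" using less.prems by simp
    then obtain R where R: "climb (Suc (Suc i)) (Suc k) = node (Suc (Suc i)) (Suc k) # R"
      using climb_Cons by (metis Suc_leI)
    have "square_move G ([] @ node i (Suc k) # node (Suc i) k # node (Suc (Suc i)) (Suc k) # R)
        ([] @ node i (Suc k) # node (Suc i) (Suc (Suc k)) # node (Suc (Suc i)) (Suc k) # R)"
      using adj_node_Suc_Suc[of i "Suc k"] adj_Suc_node_Suc[of "Suc i" "Suc k"] \<open>Suc i < m\<close>
      by (intro square_moveI) auto
    then have "square_move G (bend i k) (node i (Suc k) # bend (Suc i) (Suc k))"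
      using \<open>Suc i < m\<close> R by (simp add: bend_def climb_step)
    moreover have "homotopic G (bend (Suc i) (Suc k)) (climb (Suc i) (Suc (Suc k)))"
      using less \<open>Suc i < m\<close> by simp
    then have "homotopic G (node i (Suc k) # bend (Suc i) (Suc k)) (climb i (Suc k))"
      using homotopic_append[of G _ _ "[node i (Suc k)]" "[]"] less.prems by (simp add: climb_step)
    ultimately show ?thesis
      by (rule converse_rtranclp_into_rtranclp)
  qed
qed

definition loop :: "nat \<Rightarrow> (nat \<times> nat) option list" where
  "loop k = rev (climb 0 k) @ climb 0 (Suc k)"

lemma loop_mod: "k mod p = k' mod p \<Longrightarrow> loop k = loop k'"
  unfolding loop_def using climb_mod mod_Suc_eq by metis

lemma length_loop: "length (loop k) = 2 * m + 4"
  by (simp add: loop_def climb_def)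

lemma hd_loop: "hd (loop k) = None" and last_loop: "last (loop k) = None"
  by (simp_all add: loop_def climb_def hd_append)

lemma walk_loop: "walk G (loop k)"
proof -
  have "walk G (rev (climb 0 k))" "walk G (climb 0 (Suc k))"
    using walk_climb walk_rev[OF undirected_G] by auto
  moreover have "last (rev (climb 0 k)) = node 0 k" "hd (climb 0 (Suc k)) = node 0 (Suc k)"
    using climb_step[OF m_pos] by simp_all
  ultimately show ?thesis
    unfolding loop_def using adj_node_base by (simp add: walk_append_iff)
qed

text \<open>Two square moves turn the bottom edge \<open>\<langle>0,k\<rangle>\<langle>0,k+1\<rangle>\<close> of \<open>loop k\<close> into
  \<open>\<langle>0,k+2\<rangle>\<langle>0,k+3\<rangle>\<close>; straightening the two sides then gives \<open>loop (k + 2)\<close>.\<close>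

lemma loop_homotopic_loop_add2: "homotopic G (loop k) (loop (k + 2))"
proof -
  obtain R1 where R1: "climb (Suc 0) (Suc k) = node (Suc 0) (Suc k) # R1"
    using climb_Cons m_pos by (metis Suc_leI)
  obtain R2 where R2: "climb (Suc 0) (Suc (Suc k)) = node (Suc 0) (Suc (Suc k)) # R2"
    using climb_Cons m_pos by (metis Suc_leI)
  let ?A = "rev R1 @ [node (Suc 0) (Suc k)]"
  have "loop k = ?A @ node 0 k # node 0 (Suc k) # node (Suc 0) (Suc (Suc k)) # R2"
    unfolding loop_def using climb_step[OF m_pos] R1 R2 by simp
  moreover have "square_move G (?A @ node 0 k # node 0 (Suc k) # node (Suc 0) (Suc (Suc k)) # R2)
      (?A @ node 0 (Suc (Suc k)) # node 0 (Suc k) # node (Suc 0) (Suc (Suc k)) # R2)"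
    using square_moveI[of G "node (Suc 0) (Suc k)" "node 0 (Suc (Suc k))" "node 0 (Suc k)"
        "rev R1" "node 0 k" "node (Suc 0) (Suc (Suc k)) # R2"]
      adj_Suc_node_Suc[OF m_pos, of "Suc k"] adj_node_base[of "Suc k"] adj_sym
    by simp
  moreover have "square_move G
      (?A @ node 0 (Suc (Suc k)) # node 0 (Suc k) # node (Suc 0) (Suc (Suc k)) # R2)
      (?A @ node 0 (Suc (Suc k)) # node 0 (Suc (Suc (Suc k))) # node (Suc 0) (Suc (Suc k)) # R2)"
    using square_moveI[of G "node 0 (Suc (Suc k))" "node 0 (Suc (Suc (Suc k)))"
        "node (Suc 0) (Suc (Suc k))" ?A "node 0 (Suc k)" R2]
      adj_node_base[of "Suc (Suc k)"] adj_Suc_node_Suc[OF m_pos, of "Suc (Suc k)"]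
    by simp
  moreover have "homotopic G
      (?A @ node 0 (Suc (Suc k)) # node 0 (Suc (Suc (Suc k))) # node (Suc 0) (Suc (Suc k)) # R2)
      (loop (k + 2))"
  proof -
    have "?A @ node 0 (Suc (Suc k)) # node 0 (Suc (Suc (Suc k))) # node (Suc 0) (Suc (Suc k)) # R2
        = rev (bend 0 (Suc k)) @ bend 0 (Suc (Suc k))"
      unfolding bend_def using R1 R2 by simp
    also have "homotopic G \<dots> (rev (climb 0 (Suc (Suc k))) @ bend 0 (Suc (Suc k)))"
      using homotopic_append[OF homotopic_rev[OF undirected_G bend_homotopic_climb[OF m_pos]],
          where A = "[]" and B = "bend 0 (Suc (Suc k))"]
      by simp
    also have "homotopic G \<dots> (loop (k + 2))"
      using homotopic_append[OF bend_homotopic_climb[OF m_pos],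
          where A = "rev (climb 0 (Suc (Suc k)))" and B = "[]"]
      by (simp add: loop_def)
    finally show ?thesis .
  qed
  ultimately show ?thesis
    by (metis converse_rtranclp_into_rtranclp)
qed

lemma rev_loop_homotopic_loop: "homotopic G (rev (loop 0)) (loop 1)"
proof -
  obtain R where R: "climb (Suc 0) (Suc 0) = node (Suc 0) (Suc 0) # R"
    using climb_Cons m_pos by (metis Suc_leI)
  let ?A = "rev (climb (Suc 0) (Suc (Suc 0)))"
  have "rev (loop 0) = ?A @ node 0 (Suc 0) # node 0 0 # node (Suc 0) (Suc 0) # R"
    unfolding loop_def using climb_step[OF m_pos] R by simp
  moreover have "square_move G (?A @ node 0 (Suc 0) # node 0 0 # node (Suc 0) (Suc 0) # R)
      (?A @ node 0 (Suc 0) # node 0 (Suc (Suc 0)) # node (Suc 0) (Suc 0) # R)"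
    using adj_node_base[of "Suc 0"] adj_Suc_node_Suc[OF m_pos, of "Suc 0"]
    by (intro square_moveI)
  moreover have "?A @ node 0 (Suc 0) # node 0 (Suc (Suc 0)) # node (Suc 0) (Suc 0) # R
      = rev (climb 0 (Suc 0)) @ bend 0 (Suc 0)"
    unfolding bend_def using climb_step[OF m_pos] R by simp
  moreover have "homotopic G \<dots> (loop 1)"
    using homotopic_append[OF bend_homotopic_climb[OF m_pos],
        where A = "rev (climb 0 (Suc 0))" and B = "[]"]
    by (simp add: loop_def)
  ultimately show ?thesis
    by (metis converse_rtranclp_into_rtranclp)
qed

lemma reversible_loop: "reversible G (loop 0)"
proof -
  have "homotopic G (loop 0) (loop (2 * j))" for j
  proof (induction j)
    case (Suc j)
    then show ?case
      using loop_homotopic_loop_add2[of "2 * j"] by (simp add: rtranclp_trans)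
  qed simp
  moreover have "2 * ((p + 1) div 2) = 1 + p"
    using odd_p by simp
  then have "loop (2 * ((p + 1) div 2)) = loop 1"
    by (intro loop_mod) (simp only: mod_add_self2)
  moreover have "homotopic G (loop 1) (rev (loop 0))"
    using homotopic_sym[OF rev_loop_homotopic_loop] walk_loop walk_rev[OF undirected_G] by blast
  ultimately show ?thesis
    unfolding reversible_def using walk_loop by (metis rtranclp_trans)
qed

lemma reversible_walk_of_length:
  assumes "m + 2 \<le> l"
  obtains xs where "reversible G xs" and "length xs = 2 * l"
proof -
  define pad where "pad = alternating (node m 0) None (l - m - 2)"
  have "walk G (pad @ loop 0 @ rev pad)"
  proof (cases "pad = []")
    case True
    then show ?thesis using walk_loop by simp
  next
    case False
    then have "last pad = node m 0"
      unfolding pad_def by (cases "l - m - 2") auto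
    have "walk G pad"
      unfolding pad_def by (rule walk_alternating[OF adj_node_apex adj_sym[OF adj_node_apex]])
    then have "walk G (rev pad)"
      using walk_rev[OF undirected_G] by simp
    have "loop 0 \<noteq> []" "hd (rev pad) = node m 0"
      using length_loop[of 0] \<open>last pad = node m 0\<close> False by (auto simp: hd_rev)
    then have "walk G (loop 0 @ rev pad)"
      using walk_loop \<open>walk G (rev pad)\<close> last_loop adj_sym[OF adj_node_apex]
      by (simp add: walk_append_iff)
    then show ?thesis
      using \<open>walk G pad\<close> \<open>last pad = node m 0\<close> \<open>loop 0 \<noteq> []\<close> hd_loop adj_node_apex
      by (simp add: walk_append_iff)
  qed
  then have "reversible G (pad @ loop 0 @ rev pad)"
    using reversible_pad reversible_loop by blast
  moreover have "length (pad @ loop 0 @ rev pad) = 2 * l"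
    using assms by (simp add: pad_def length_loop)
  ultimately show ?thesis using that by blast
qed

end

theorem theorem12:
  fixes m n s t :: nat
  assumes "m > 0" and "n > 0" and "s > 0" and "t > 0"
  shows "\<not> is_cover_graph
           (direct_product (mycielskian m (cycle_graph (2 * s + 1)))
                           (mycielskian n (cycle_graph (2 * t + 1))))"
proof -
  interpret left: odd_mycielskian m "2 * s + 1"
    using assms(1) by unfold_locales auto
  interpret right: odd_mycielskian n "2 * t + 1"
    using assms(2) by unfold_locales auto
  define l where "l = max m n + 2"
  obtain xs where xs: "reversible left.G xs" "length xs = 2 * l"
    using left.reversible_walk_of_length[of l] l_def by auto
  obtain zs where zs: "reversible right.G zs" "length zs = 2 * l"
    using right.reversible_walk_of_length[of l] l_def by auto
  show ?thesis
    by (rule direct_product_not_cover_graph[OF left.undirected_G right.undirected_G xs(1) zs(1)])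
      (use xs(2) zs(2) l_def in auto)
qed

end
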